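(* Let $\{(\lambda^\alpha_{i,j})_{i,j\in\mathbb{N}}:\alpha<\omega_1\}$ be a family of real matrices each of which satisfies: (i) $\lim_{i\to\infty}\lambda^\alpha_{i,j}=0$ for every $j\in\mathbb{N}$; (ii) $\sum_{j\in\mathbb{N}}|\lambda^\alpha_{i,j}|<\infty$ for every $i\in\mathbb{N}$; (iii) $\lim_{i\to\infty}\sum_{j\in\mathbb{N}}\lambda^\alpha_{i,j}=1$. Then there exists an almost disjoint family $\mathcal{F}$ such that for every $\alpha<\omega_1$ there is $N'_\alpha\in\mathcal{F}$ for which the sequence $\big(\sum_{j\in N'_\alpha}\lambda^\alpha_{i,j}\big)_{i\in\mathbb{N}}$ does not converge to $0$.
   Context: An almost disjoint family is an infinite family of pairwise almost disjoint infinite subsets of $\mathbb{N}$, where two sets are almost disjoint if their intersection is finite. $\omega_1$ is the first uncountable ordinal. *)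

theory Defs
  imports Complex_Main
begin

definition almost_disjoint_family :: "nat set set \<Rightarrow> bool" where
  "almost_disjoint_family F \<longleftrightarrow>
     infinite F \<and> (\<forall>A\<in>F. infinite A) \<and>
     (\<forall>A\<in>F. \<forall>B\<in>F. A \<noteq> B \<longrightarrow> finite (A \<inter> B))"

end

theory Submission
  imports Defs "HOL-Library.Countable_Set_Type" "HOL-Analysis.Infinite_Sum"
begin

text \<open>
  Well-order the index set so that every index has only countably many predecessors and build
  the family by transfinite recursion, starting from a countable partition of \<open>\<nat>\<close> into
  infinitely many infinite sets. At stage \<open>\<alpha>\<close> the family built so far is countable. If
  one of its members already makes the row sums of the \<open>\<alpha>\<close>-th matrix fail to tend to 0,
  nothing is added. Otherwise the row sums over every finite union \<open>D k\<close> of members tend to 0,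
  hence those over its complement tend to 1, and a diagonal argument chooses rows \<open>i k\<close> and
  consecutive blocks \<open>[b k, b (k + 1))\<close> carrying all but \<open>1/4\<close> of the absolute mass of
  row \<open>i k\<close>. The union of the sets \<open>[b k, b (k + 1)) - D k\<close> is almost disjoint from
  every member, and its sum along row \<open>i k\<close> is at least \<open>1/4\<close>.
\<close>

unbundle cardinal_syntax

definition almost_disjoint :: "'a set \<Rightarrow> 'a set \<Rightarrow> bool" where
  "almost_disjoint A B \<longleftrightarrow> finite (A \<inter> B)"

lemma ex_wellorder_countable_initial_segments:
  assumes "|UNIV :: 'a set| \<le>o cardSuc natLeq"
  shows "\<exists>R :: 'a rel. wf R \<and> trans R \<and> total R \<and> (\<forall>x. countable {y. (y, x) \<in> R})"
proof -
  let ?r = "cardSuc natLeq"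
  have card_order: "Card_order ?r"
    using cardSuc_Card_order natLeq_Card_order by blast
  then have well_order: "wo_rel ?r"
    using card_order_on_well_order_on wo_rel_def by blast
  have "|UNIV :: 'a set| \<le>o |Field ?r|"
    using ordLeq_ordIso_trans[OF assms ordIso_symmetric[OF card_of_Field_ordIso[OF card_order]]] .
  then obtain f :: "'a \<Rightarrow> _" where inj: "inj f" and f_Field: "range f \<subseteq> Field ?r"
    unfolding card_of_ordLeq[symmetric] by blast
  define R where "R = inv_image (?r - Id) f"
  have "wf R"
    unfolding R_def using well_order by (intro wf_inv_image wo_rel.WF)
  moreover have "trans R"
    unfolding R_def using well_order by (intro trans_inv_image trans_diff_Id wo_rel.TRANS wo_rel.ANTISYM)
  moreover have "total R"
  proof (rule total_onI)
    fix x y :: 'a assume "x \<noteq> y"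
    then have "f x \<noteq> f y"
      using inj by (auto dest: injD)
    moreover have "f x \<in> Field ?r" "f y \<in> Field ?r"
      using f_Field by auto
    ultimately show "(x, y) \<in> R \<or> (y, x) \<in> R"
      using wo_rel.TOTALS[OF well_order] unfolding R_def by auto
  qed
  moreover have "countable {y. (y, x) \<in> R}" for x
  proof -
    have "|underS ?r (f x)| <o ?r"
      using card_of_underS[OF card_order] f_Field by blast
    then have "countable (underS ?r (f x))"
      using cardSuc_ordLeq_ordLess[OF natLeq_Card_order card_of_Card_order] countable_card_le_natLeq
      by blast
    moreover have "f ` {y. (y, x) \<in> R} \<subseteq> underS ?r (f x)"
      by (auto simp: R_def underS_def)
    ultimately show ?thesis
      using inj by (meson countable_image_inj_on countable_subset inj_on_subset subset_UNIV)
  qed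
  ultimately show ?thesis
    by blast
qed

lemma transfinite_almost_disjoint_family:
  fixes R :: "'a rel" and W :: "'a \<Rightarrow> 'b set \<Rightarrow> bool"
  assumes "wf R" "trans R" "total R" and below_countable: "\<And>x. countable {y. (y, x) \<in> R}"
    and "countable C0" "pairwise almost_disjoint C0"
    and extend: "\<And>x C. countable C \<Longrightarrow> pairwise almost_disjoint C \<Longrightarrow>
      \<exists>N. W x N \<and> pairwise almost_disjoint (insert N C)"
  shows "\<exists>g. (\<forall>x. W x (g x)) \<and> pairwise almost_disjoint (C0 \<union> range g)"
proof -
  define below where "below x = {y. (y, x) \<in> R}" for x
  define G where "G h x = (SOME N. W x N \<and> pairwise almost_disjoint (insert N (C0 \<union> h ` below x)))"
    for h x
  define g where "g = wfrec R G"
  have g_eq: "g x = (SOME N. W x N \<and> pairwise almost_disjoint (insert N (C0 \<union> g ` below x)))" for x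
  proof -
    have "g x = G (cut g R x) x"
      unfolding g_def by (rule wfrec[OF \<open>wf R\<close>])
    moreover have "cut g R x ` below x = g ` below x"
      by (auto simp: below_def cut_apply)
    ultimately show ?thesis
      by (simp add: G_def)
  qed
  define stage where "stage x = insert (g x) (C0 \<union> g ` below x)" for x
  have stage_mono: "stage x \<subseteq> stage y" if "(x, y) \<in> R" for x y
    using that \<open>trans R\<close> unfolding stage_def below_def by (auto dest: transD)
  have "stage x \<subseteq> stage y \<or> stage y \<subseteq> stage x" for x y
    using stage_mono \<open>total R\<close> unfolding total_on_def by (metis UNIV_I order_refl)
  moreover have "C0 \<subseteq> stage x" for x
    by (auto simp: stage_def)
  ultimately have chain: "chain\<^sub>\<subseteq> (insert C0 (stage ` S))" for S
    unfolding chain_subset_def by blast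
  have stage: "W x (g x) \<and> pairwise almost_disjoint (stage x)" for x
    using \<open>wf R\<close>
  proof (induction x rule: wf_induct_rule)
    case (less x)
    have "pairwise almost_disjoint (\<Union>(insert C0 (stage ` below x)))"
      using less.IH \<open>pairwise almost_disjoint C0\<close>
      by (intro pairwise_chain_Union[OF _ chain]) (auto simp: below_def)
    moreover have "\<Union>(insert C0 (stage ` below x)) = C0 \<union> g ` below x"
      using \<open>trans R\<close> by (auto simp: below_def stage_def dest: transD)
    ultimately have "pairwise almost_disjoint (C0 \<union> g ` below x)"
      by simp
    moreover have "countable (C0 \<union> g ` below x)"
      using \<open>countable C0\<close> below_countable by (simp add: below_def)
    ultimately have "\<exists>N. W x N \<and> pairwise almost_disjoint (insert N (C0 \<union> g ` below x))"
      using extend by blast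
    then show ?case
      unfolding stage_def g_eq[of x] by (rule someI_ex)
  qed
  have "pairwise almost_disjoint (\<Union>(insert C0 (range stage)))"
    using stage \<open>pairwise almost_disjoint C0\<close> by (intro pairwise_chain_Union[OF _ chain]) auto
  moreover have "\<Union>(insert C0 (range stage)) = C0 \<union> range g"
    by (auto simp: stage_def)
  ultimately have "pairwise almost_disjoint (C0 \<union> range g)"
    by simp
  with stage show ?thesis
    by blast
qed

lemma ex_countable_infinite_almost_disjoint_family:
  "\<exists>C :: nat set set. countable C \<and> infinite C \<and> pairwise almost_disjoint C \<and> (\<forall>A\<in>C. infinite A)"
proof -
  obtain P :: "nat \<Rightarrow> nat set" where disjoint: "pairwise (\<lambda>i j. disjnt (P i) (P j)) UNIV"
    and infinite: "\<And>i. infinite (P i)"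
    using infinite_infinite_partition[OF infinite_UNIV_nat] by metis
  have "inj P"
    by (metis disjoint infinite injI pairwise_def UNIV_I disjnt_self_iff_empty finite.emptyI)
  moreover have "pairwise almost_disjoint (range P)"
  proof (rule pairwiseI)
    fix A B assume "A \<in> range P" "B \<in> range P" "A \<noteq> B"
    then obtain i j where "A = P i" "B = P j" "i \<noteq> j"
      by blast
    then show "almost_disjoint A B"
      using disjoint by (auto simp: pairwise_def disjnt_def almost_disjoint_def)
  qed
  ultimately show ?thesis
    using infinite range_inj_infinite by (intro exI[of _ "range P"]) auto
qed

lemma infsum_Compl:
  fixes f :: "'a \<Rightarrow> 'b::banach"
  assumes "f summable_on UNIV"
  shows "infsum f (- A) = infsum f UNIV - infsum f A"
proof -
  have "infsum f UNIV = infsum f A + infsum f (- A)"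
    using infsum_Un_disjoint[of f A "- A"] summable_on_subset_banach[OF assms] by (simp add: Compl_partition)
  then show ?thesis by (simp add: algebra_simps)
qed

lemma tendsto_infsum_atLeast_zero:
  fixes f :: "nat \<Rightarrow> 'b::banach"
  assumes "f summable_on UNIV"
  shows "(\<lambda>n. infsum f {n..}) \<longlonglongrightarrow> 0"
proof -
  have "(\<lambda>n. sum f {..<n}) \<longlonglongrightarrow> infsum f UNIV"
    using has_sum_imp_sums[OF has_sum_infsum[OF assms]] by (simp add: sums_def)
  then have "(\<lambda>n. infsum f UNIV - sum f {..<n}) \<longlonglongrightarrow> infsum f UNIV - infsum f UNIV"
    by (intro tendsto_diff tendsto_const)
  moreover have "infsum f {n..} = infsum f UNIV - sum f {..<n}" for n
    using infsum_Compl[OF assms, of "{..<n}"] by simp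
  ultimately show ?thesis by simp
qed

lemma abs_infsum_diff_Int_le:
  fixes f :: "'a \<Rightarrow> real"
  assumes "f summable_on UNIV"
  shows "\<bar>infsum f A - infsum f (A \<inter> B)\<bar> \<le> infsum (\<lambda>x. \<bar>f x\<bar>) (- B)"
proof -
  have summable: "f summable_on S" for S
    using summable_on_subset_banach[OF assms] by blast
  have abs_summable: "(\<lambda>x. \<bar>f x\<bar>) summable_on S" for S
    using summable summable_on_iff_abs_summable_on_real by fastforce
  have "infsum f A = infsum f (A \<inter> B) + infsum f (A - B)"
    using infsum_Un_disjoint[OF summable summable, of "A \<inter> B" "A - B"] by (simp add: Int_Diff_Un Int_Diff_disjoint)
  moreover have "\<bar>infsum f (A - B)\<bar> \<le> infsum (\<lambda>x. \<bar>f x\<bar>) (A - B)"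
    using norm_infsum_bound[of f "A - B"] abs_summable by simp
  moreover have "infsum (\<lambda>x. \<bar>f x\<bar>) (A - B) \<le> infsum (\<lambda>x. \<bar>f x\<bar>) (- B)"
    by (rule infsum_mono_neutral[OF abs_summable abs_summable]) auto
  ultimately show ?thesis by simp
qed

lemma Int_diagonal_Union_block:
  fixes b :: "nat \<Rightarrow> nat" and D :: "nat \<Rightarrow> nat set"
  assumes "mono b"
  shows "(\<Union>k. {b k..<b (Suc k)} - D k) \<inter> {b k..<b (Suc k)} = {b k..<b (Suc k)} - D k"
proof -
  have "k' = k" if "j \<in> {b k'..<b (Suc k')}" "j \<in> {b k..<b (Suc k)}" for j k'
    using assms that
    by (metis atLeastLessThan_iff le_less_trans less_le_not_le linorder_neqE_nat monoD not_less_eq_eq)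
  then show ?thesis
    by blast
qed

lemma diagonal_Union_Int_subset:
  fixes b :: "nat \<Rightarrow> nat" and D :: "nat \<Rightarrow> nat set"
  assumes "mono b" "incseq D"
  shows "(\<Union>k. {b k..<b (Suc k)} - D k) \<inter> D m \<subseteq> {..<b m}"
proof
  fix j assume "j \<in> (\<Union>k. {b k..<b (Suc k)} - D k) \<inter> D m"
  then obtain k where "j \<in> {b k..<b (Suc k)}" "j \<notin> D k" "j \<in> D m"
    by blast
  moreover from this have "Suc k \<le> m"
    using \<open>incseq D\<close> by (meson incseqD not_less_eq_eq subsetD)
  ultimately show "j \<in> {..<b m}"
    using monoD[OF \<open>mono b\<close>] by fastforce
qed

text \<open>
  The sum of row \<open>i\<close> of \<open>L\<close> over \<open>A\<close> is \<open>infsum (L i) A\<close>; ``null'' in the lemma names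
  below means that these sums tend to 0 as \<open>i \<rightarrow> \<infinity>\<close>.
\<close>

context
  fixes L :: "nat \<Rightarrow> nat \<Rightarrow> real"
  assumes rows: "\<And>i. L i summable_on UNIV"
    and columns: "\<And>j. (\<lambda>i. L i j) \<longlonglongrightarrow> 0"
begin

lemma row_summable_on: "L i summable_on A"
  using summable_on_subset_banach[OF rows] by blast

lemma tendsto_infsum_finite_zero:
  assumes "finite A"
  shows "(\<lambda>i. infsum (L i) A) \<longlonglongrightarrow> 0"
  using tendsto_null_sum[OF columns, of "\<lambda>j. j" A] assms by simp

lemma tendsto_infsum_Union_zero:
  assumes "finite C" "pairwise almost_disjoint C"
    and "\<And>A. A \<in> C \<Longrightarrow> (\<lambda>i. infsum (L i) A) \<longlonglongrightarrow> 0"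
  shows "(\<lambda>i. infsum (L i) (\<Union>C)) \<longlonglongrightarrow> 0"
  using assms
proof (induction C rule: finite_induct)
  case empty
  then show ?case by simp
next
  case (insert M C)
  have "finite (M \<inter> B)" if "B \<in> C" for B
    using insert.prems(1) insert.hyps(2) that unfolding pairwise_insert almost_disjoint_def by blast
  then have "(\<lambda>i. infsum (L i) (M \<inter> \<Union>C)) \<longlonglongrightarrow> 0"
    unfolding Int_Union by (intro tendsto_infsum_finite_zero finite_UN_I[OF insert.hyps(1)])
  moreover have "(\<lambda>i. infsum (L i) (\<Union>C)) \<longlonglongrightarrow> 0"
    using insert.prems by (intro insert.IH) (simp_all add: pairwise_insert)
  moreover have "(\<lambda>i. infsum (L i) M) \<longlonglongrightarrow> 0"
    using insert.prems(2) by simp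
  ultimately have "(\<lambda>i. infsum (L i) M + infsum (L i) (\<Union>C) - infsum (L i) (M \<inter> \<Union>C)) \<longlonglongrightarrow> 0 + 0 - 0"
    by (intro tendsto_diff tendsto_add)
  moreover have "infsum (L i) (M \<union> \<Union>C) = infsum (L i) M + infsum (L i) (\<Union>C) - infsum (L i) (M \<inter> \<Union>C)" for i
    by (intro infsum_Un_Int row_summable_on)
  ultimately show ?case
    by simp
qed

lemma exists_row_concentrated_on_block:
  assumes "(\<lambda>i. infsum (L i) E) \<longlonglongrightarrow> 1"
  shows "\<exists>b'\<ge>b. \<exists>i\<ge>k. infsum (\<lambda>j. \<bar>L i j\<bar>) (- {b..<b'}) \<le> 1/4 \<and> 3/4 \<le> infsum (L i) E"
proof -
  have abs_summable: "(\<lambda>j. \<bar>L i j\<bar>) summable_on A" for i A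
    using row_summable_on summable_on_iff_abs_summable_on_real by fastforce
  have "(\<lambda>i. infsum (\<lambda>j. \<bar>L i j\<bar>) {..<b}) \<longlonglongrightarrow> 0"
    using tendsto_null_sum[OF tendsto_rabs_zero[OF columns], of "\<lambda>j. j" "{..<b}"] by simp
  then have "\<forall>\<^sub>F i in sequentially. infsum (\<lambda>j. \<bar>L i j\<bar>) {..<b} < 1/8"
    by (rule order_tendstoD) simp
  moreover have "\<forall>\<^sub>F i in sequentially. 3/4 < infsum (L i) E"
    using assms by (rule order_tendstoD) simp
  ultimately have "\<forall>\<^sub>F i in sequentially. i \<ge> k \<and> infsum (\<lambda>j. \<bar>L i j\<bar>) {..<b} < 1/8 \<and> 3/4 < infsum (L i) E"
    using eventually_ge_at_top[of k] by eventually_elim auto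
  then obtain i where i: "i \<ge> k" "infsum (\<lambda>j. \<bar>L i j\<bar>) {..<b} < 1/8" "3/4 < infsum (L i) E"
    using eventually_happens'[OF sequentially_bot] by blast
  have "\<forall>\<^sub>F b' in sequentially. infsum (\<lambda>j. \<bar>L i j\<bar>) {b'..} < 1/8"
    using tendsto_infsum_atLeast_zero[OF abs_summable[of i UNIV]] by (rule order_tendstoD) simp
  then have "\<forall>\<^sub>F b' in sequentially. b' \<ge> b \<and> infsum (\<lambda>j. \<bar>L i j\<bar>) {b'..} < 1/8"
    using eventually_ge_at_top[of b] by eventually_elim auto
  then obtain b' where b': "b' \<ge> b" "infsum (\<lambda>j. \<bar>L i j\<bar>) {b'..} < 1/8"
    using eventually_happens'[OF sequentially_bot] by blast
  have "- {b..<b'} = {..<b} \<union> {b'..}" "{..<b} \<inter> {b'..} = {}"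
    using b'(1) by auto
  then have "infsum (\<lambda>j. \<bar>L i j\<bar>) (- {b..<b'}) = infsum (\<lambda>j. \<bar>L i j\<bar>) {..<b} + infsum (\<lambda>j. \<bar>L i j\<bar>) {b'..}"
    by (simp only: infsum_Un_disjoint[OF abs_summable abs_summable])
  then have "infsum (\<lambda>j. \<bar>L i j\<bar>) (- {b..<b'}) \<le> 1/4"
    using i(2) b'(2) by linarith
  then show ?thesis
    using i(1,3) b'(1) by (intro exI[of _ b'] exI[of _ i] conjI) simp_all
qed

lemma exists_rows_concentrated_on_blocks:
  assumes "\<And>k. (\<lambda>i. infsum (L i) (E k)) \<longlonglongrightarrow> 1"
  obtains b row where "mono b" "\<And>k. k \<le> row k"
    and "\<And>k. infsum (\<lambda>j. \<bar>L (row k) j\<bar>) (- {b k..<b (Suc k)}) \<le> 1/4"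
    and "\<And>k. 3/4 \<le> infsum (L (row k)) (E k)"
proof -
  define good_block where "good_block k b b' \<longleftrightarrow> b \<le> b' \<and>
      (\<exists>i\<ge>k. infsum (\<lambda>j. \<bar>L i j\<bar>) (- {b..<b'}) \<le> 1/4 \<and> 3/4 \<le> infsum (L i) (E k))" for k b b'
  have "\<exists>b. \<forall>k. True \<and> good_block k (b k) (b (Suc k))"
  proof (intro dependent_nat_choice)
    fix b k
    show "\<exists>b'. True \<and> good_block k b b'"
      using exists_row_concentrated_on_block[OF assms[of k], of b k] unfolding good_block_def by blast
  qed simp
  then obtain b where b_mono: "\<And>k. b k \<le> b (Suc k)"
    and b_row: "\<And>k. \<exists>i\<ge>k. infsum (\<lambda>j. \<bar>L i j\<bar>) (- {b k..<b (Suc k)}) \<le> 1/4 \<and> 3/4 \<le> infsum (L i) (E k)"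
    unfolding good_block_def by blast
  from b_row obtain row where "\<And>k. k \<le> row k"
    and "\<And>k. infsum (\<lambda>j. \<bar>L (row k) j\<bar>) (- {b k..<b (Suc k)}) \<le> 1/4"
    and "\<And>k. 3/4 \<le> infsum (L (row k)) (E k)"
    by metis
  moreover have "mono b"
    using b_mono by (simp add: mono_iff_le_Suc)
  ultimately show ?thesis
    using that by blast
qed

lemma exists_nonnull_set_almost_disjoint_from_incseq:
  assumes total: "(\<lambda>i. infsum (L i) UNIV) \<longlonglongrightarrow> 1"
    and null: "\<And>k. (\<lambda>i. infsum (L i) (D k)) \<longlonglongrightarrow> 0" and "incseq D"
  shows "\<exists>N. (\<forall>k. finite (N \<inter> D k)) \<and> \<not> (\<lambda>i. infsum (L i) N) \<longlonglongrightarrow> 0"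
proof -
  have co_null: "(\<lambda>i. infsum (L i) (- D k)) \<longlonglongrightarrow> 1" for k
  proof -
    have "(\<lambda>i. infsum (L i) UNIV - infsum (L i) (D k)) \<longlonglongrightarrow> 1 - 0"
      by (intro tendsto_diff total null)
    then show ?thesis
      by (simp add: infsum_Compl rows)
  qed
  obtain b row where "mono b" and row_ge: "\<And>k. k \<le> row k"
    and row_block: "\<And>k. infsum (\<lambda>j. \<bar>L (row k) j\<bar>) (- {b k..<b (Suc k)}) \<le> 1/4"
    and row_co_null: "\<And>k. 3/4 \<le> infsum (L (row k)) (- D k)"
    using exists_rows_concentrated_on_blocks[where E = "\<lambda>k. - D k", OF co_null] by blast
  define N where "N = (\<Union>k. {b k..<b (Suc k)} - D k)"
  have "finite (N \<inter> D m)" for m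
    using diagonal_Union_Int_subset[OF \<open>mono b\<close> \<open>incseq D\<close>] unfolding N_def
    by (meson finite_lessThan finite_subset)
  moreover have lower: "1/4 \<le> infsum (L (row k)) N" for k
  proof -
    have N_block: "N \<inter> {b k..<b (Suc k)} = - D k \<inter> {b k..<b (Suc k)}"
      using Int_diagonal_Union_block[OF \<open>mono b\<close>] unfolding N_def by blast
    have "\<bar>infsum (L (row k)) N - infsum (L (row k)) (N \<inter> {b k..<b (Suc k)})\<bar> \<le> 1/4"
      using abs_infsum_diff_Int_le[OF rows] row_block[of k] by (rule order_trans)
    moreover have "\<bar>infsum (L (row k)) (- D k) - infsum (L (row k)) (N \<inter> {b k..<b (Suc k)})\<bar> \<le> 1/4"
      unfolding N_block using abs_infsum_diff_Int_le[OF rows] row_block[of k] by (rule order_trans)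
    ultimately show ?thesis
      using row_co_null[of k] by linarith
  qed
  have "\<not> (\<lambda>i. infsum (L i) N) \<longlonglongrightarrow> 0"
  proof
    assume "(\<lambda>i. infsum (L i) N) \<longlonglongrightarrow> 0"
    then have "\<forall>\<^sub>F i in sequentially. infsum (L i) N < 1/4"
      by (rule order_tendstoD) simp
    then obtain n where "\<And>i. n \<le> i \<Longrightarrow> infsum (L i) N < 1/4"
      unfolding eventually_sequentially by blast
    then show False
      using lower[of n] row_ge[of n] by fastforce
  qed
  ultimately show ?thesis
    by blast
qed

lemma exists_nonnull_set_almost_disjoint_from_countable:
  assumes total: "(\<lambda>i. infsum (L i) UNIV) \<longlonglongrightarrow> 1"
    and "countable C" "pairwise almost_disjoint C"
    and null: "\<And>A. A \<in> C \<Longrightarrow> (\<lambda>i. infsum (L i) A) \<longlonglongrightarrow> 0"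
  shows "\<exists>N. (\<forall>A\<in>C. almost_disjoint N A) \<and> \<not> (\<lambda>i. infsum (L i) N) \<longlonglongrightarrow> 0"
proof -
  define D where "D k = \<Union>{A \<in> C. to_nat_on C A < k}" for k
  have "finite {A \<in> C. to_nat_on C A < k}" for k
    using finite_vimage_IntI[OF finite_lessThan inj_on_to_nat_on[OF \<open>countable C\<close>], of k]
    by (simp add: vimage_def Int_def conj_commute)
  then have "(\<lambda>i. infsum (L i) (D k)) \<longlonglongrightarrow> 0" for k
    unfolding D_def
    using pairwise_subset[OF \<open>pairwise almost_disjoint C\<close>] null
    by (intro tendsto_infsum_Union_zero) auto
  moreover have "incseq D"
    unfolding incseq_def D_def by auto
  ultimately obtain N where N: "\<And>k. finite (N \<inter> D k)" "\<not> (\<lambda>i. infsum (L i) N) \<longlonglongrightarrow> 0"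
    using exists_nonnull_set_almost_disjoint_from_incseq[OF total] by blast
  have "A \<subseteq> D (Suc (to_nat_on C A))" if "A \<in> C" for A
    using that unfolding D_def by blast
  then have "almost_disjoint N A" if "A \<in> C" for A
    using N(1) that unfolding almost_disjoint_def by (meson Int_mono finite_subset order_refl)
  with N(2) show ?thesis
    by blast
qed

lemma exists_nonnull_set_extending_almost_disjoint:
  assumes total: "(\<lambda>i. infsum (L i) UNIV) \<longlonglongrightarrow> 1"
    and "countable C" "pairwise almost_disjoint C"
  shows "\<exists>N. \<not> (\<lambda>i. infsum (L i) N) \<longlonglongrightarrow> 0 \<and> pairwise almost_disjoint (insert N C)"
proof (cases "\<exists>M\<in>C. \<not> (\<lambda>i. infsum (L i) M) \<longlonglongrightarrow> 0")
  case True
  then show ?thesis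
    using assms(3) by (metis insert_absorb)
next
  case False
  then obtain N where "\<forall>A\<in>C. almost_disjoint N A" "\<not> (\<lambda>i. infsum (L i) N) \<longlonglongrightarrow> 0"
    using exists_nonnull_set_almost_disjoint_from_countable[OF total assms(2,3)] by blast
  moreover have "almost_disjoint A N" if "almost_disjoint N A" for A
    using that by (simp add: almost_disjoint_def Int_commute)
  ultimately show ?thesis
    using assms(3) by (auto simp: pairwise_insert)
qed

end

lemma suminf_restrict_eq_infsum:
  fixes f :: "nat \<Rightarrow> real"
  assumes "summable (\<lambda>j. \<bar>f j\<bar>)"
  shows "(\<Sum>j. if j \<in> A then f j else 0) = infsum f A"
proof -
  have "f summable_on A"
    using norm_summable_imp_summable_on[of f] assms summable_on_subset_banach by auto
  then have "(f has_sum infsum f A) A"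
    by (rule has_sum_infsum)
  then have "((\<lambda>j. if j \<in> A then f j else 0) has_sum infsum f A) UNIV"
    by (subst has_sum_cong_neutral[where T = A]) auto
  then show ?thesis
    by (metis has_sum_imp_sums sums_unique)
qed

theorem lemma4p12:
  fixes lam :: "'a \<Rightarrow> nat \<Rightarrow> nat \<Rightarrow> real"
  assumes omega1: "(card_of (UNIV :: 'a set), cardSuc natLeq) \<in> ordLeq"
    and i: "\<And>\<alpha> j. (\<lambda>i. lam \<alpha> i j) \<longlonglongrightarrow> 0"
    and ii: "\<And>\<alpha> i. summable (\<lambda>j. \<bar>lam \<alpha> i j\<bar>)"
    and iii: "\<And>\<alpha>. (\<lambda>i. \<Sum>j. lam \<alpha> i j) \<longlonglongrightarrow> 1"
  shows "\<exists>F. almost_disjoint_family F \<and>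
           (\<forall>\<alpha>. \<exists>N\<in>F. \<not> ((\<lambda>i. \<Sum>j. if j \<in> N then lam \<alpha> i j else 0) \<longlonglongrightarrow> 0))"
proof -
  have sum_eq: "(\<Sum>j. if j \<in> N then lam \<alpha> i j else 0) = infsum (lam \<alpha> i) N" for \<alpha> i N
    using suminf_restrict_eq_infsum[OF ii] .
  have rows: "lam \<alpha> i summable_on UNIV" for \<alpha> i
    using ii by (intro norm_summable_imp_summable_on) simp
  have total: "(\<lambda>i. infsum (lam \<alpha> i) UNIV) \<longlonglongrightarrow> 1" for \<alpha>
    using iii sum_eq[where N = UNIV] by simp
  obtain R :: "'a rel" where R: "wf R" "trans R" "total R" "\<And>x. countable {y. (y, x) \<in> R}"
    using ex_wellorder_countable_initial_segments[OF omega1] by blast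
  obtain C0 :: "nat set set" where C0: "countable C0" "infinite C0" "pairwise almost_disjoint C0"
    "\<forall>A\<in>C0. infinite A"
    using ex_countable_infinite_almost_disjoint_family by blast
  have "\<exists>g. (\<forall>\<alpha>. \<not> (\<lambda>i. infsum (lam \<alpha> i) (g \<alpha>)) \<longlonglongrightarrow> 0) \<and> pairwise almost_disjoint (C0 \<union> range g)"
    by (rule transfinite_almost_disjoint_family[OF R C0(1,3),
          where W = "\<lambda>\<alpha> N. \<not> (\<lambda>i. infsum (lam \<alpha> i) N) \<longlonglongrightarrow> 0"])
      (rule exists_nonnull_set_extending_almost_disjoint[OF rows i total])
  then obtain g where nonnull: "\<And>\<alpha>. \<not> (\<lambda>i. infsum (lam \<alpha> i) (g \<alpha>)) \<longlonglongrightarrow> 0"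
    and "pairwise almost_disjoint (C0 \<union> range g)"
    by blast
  moreover have "infinite (g \<alpha>)" for \<alpha>
    using nonnull tendsto_infsum_finite_zero[OF rows i] by blast
  ultimately have "almost_disjoint_family (C0 \<union> range g)"
    using C0(2,4) unfolding almost_disjoint_family_def pairwise_def almost_disjoint_def by auto
  then show ?thesis
    using nonnull by (auto simp: sum_eq)
qed

end
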